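(* Let $\alpha,\beta,p,q\in\mathbb{C}$ be constants with $p^2\neq q^2$, and set $s^2=\alpha^2-p^2$, $\mu^2=\alpha^2-q^2$, $t^2=\beta^2-p^2$, $\nu^2=\beta^2-q^2$. Let $h,g:\mathbb{Z}^2\to\mathbb{C}$ satisfy $\widehat{h}-\widetilde{h}=\widetilde{\widetilde{g}}-g$ and $(h+\widetilde g)g=\beta^2-\alpha^2$. Let $\varphi_1,\varphi_2$ be two linearly independent solutions of $$\widetilde{\widetilde{\varphi}}+h\,\widetilde{\varphi}+\alpha^2\varphi=p^2\varphi,\qquad \widehat{\varphi}=\widetilde{\varphi}-g\,\varphi,$$ and $\phi_1,\phi_2$ two linearly independent solutions of $$\widetilde{\widetilde{\phi}}+h\,\widetilde{\phi}+\alpha^2\phi=q^2\phi,\qquad \widehat{\phi}=\widetilde{\phi}-g\,\phi .$$ Let $\rho_1,\rho_2$ be the constants with $\varphi_1\widetilde\varphi_2-\varphi_2\widetilde\varphi_1=\rho_1 s^{2n}t^{2m}$ and $\phi_1\widetilde\phi_2-\phi_2\widetilde\phi_1=\rho_2\mu^{2n}\nu^{2m}$. Let $M=\begin{pmatrix}A&B\\C&D\end{pmatrix}$ be a constant matrix, $\langle\Phi_p|=(\varphi_1\ \ \varphi_2)$, $|\Phi_q\rangle=(\phi_1\ \ \phi_2)^{\intercal}$, and $$Y=\langle\Phi_p|M|\widetilde{\Phi}_q\rangle-\langle\widetilde{\Phi}_p|M|\Phi_q\rangle=\sum_{i,j=1}^2 M_{ij}\big(\varphi_i\widetilde{\phi}_j-\phi_j\widetilde{\varphi}_i\big).$$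 Then $Y$ satisfies the leKdV-II$(\delta)$ equation $$s^2\mu^2Y\widehat{Y}+\widetilde{Y}\widehat{\widetilde{Y}}-t^2\nu^2Y\widetilde{Y}-\widehat{Y}\widehat{\widetilde{Y}}=(\alpha^2-\beta^2)\Big(Y\widehat{\widetilde{Y}}+\widetilde{Y}\widehat{Y}+\delta\,(p^2-q^2)^2s^{2n}\mu^{2n}t^{2m}\nu^{2m}\Big)$$ with $\delta=\rho_1\rho_2\det M$.
   Context: Shift notation: for a function $f$ on $\mathbb{Z}^2$ (variables $n,m$), $\widetilde f(n,m)=f(n+1,m)$, $\widehat f(n,m)=f(n,m+1)$, and combined accents denote composed shifts; accents on vectors act componentwise. $M_{11}=A$, $M_{12}=B$, $M_{21}=C$, $M_{22}=D$. *)

theory Defs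
  imports Complex_Main
begin

(* Lattice functions on Z^2: f n m.  tilde shift: n+1, hat shift: m+1. *)

definition lin_indep2 :: "(int \<Rightarrow> int \<Rightarrow> complex) \<Rightarrow> (int \<Rightarrow> int \<Rightarrow> complex) \<Rightarrow> bool" where
  "lin_indep2 f1 f2 \<longleftrightarrow>
     (\<forall>c1 c2. (\<forall>n m. c1 * f1 n m + c2 * f2 n m = 0) \<longrightarrow> c1 = 0 \<and> c2 = 0)"

definition lax_sol :: "complex \<Rightarrow> complex \<Rightarrow> (int \<Rightarrow> int \<Rightarrow> complex) \<Rightarrow> (int \<Rightarrow> int \<Rightarrow> complex)
     \<Rightarrow> (int \<Rightarrow> int \<Rightarrow> complex) \<Rightarrow> bool" where
  "lax_sol \<alpha> k h g \<phi> \<longleftrightarrow>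
     (\<forall>n m. \<phi> (n+2) m + h n m * \<phi> (n+1) m + \<alpha>^2 * \<phi> n m = k^2 * \<phi> n m
          \<and> \<phi> n (m+1) = \<phi> (n+1) m - g n m * \<phi> n m)"

definition Yfun :: "complex \<Rightarrow> complex \<Rightarrow> complex \<Rightarrow> complex \<Rightarrow>
     (int \<Rightarrow> int \<Rightarrow> complex) \<Rightarrow> (int \<Rightarrow> int \<Rightarrow> complex) \<Rightarrow>
     (int \<Rightarrow> int \<Rightarrow> complex) \<Rightarrow> (int \<Rightarrow> int \<Rightarrow> complex) \<Rightarrow> int \<Rightarrow> int \<Rightarrow> complex" where
  "Yfun A B C D \<phi>1 \<phi>2 \<psi>1 \<psi>2 n m =
     A * (\<phi>1 n m * \<psi>1 (n+1) m - \<psi>1 n m * \<phi>1 (n+1) m)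
   + B * (\<phi>1 n m * \<psi>2 (n+1) m - \<psi>2 n m * \<phi>1 (n+1) m)
   + C * (\<phi>2 n m * \<psi>1 (n+1) m - \<psi>1 n m * \<phi>2 (n+1) m)
   + D * (\<phi>2 n m * \<psi>2 (n+1) m - \<psi>2 n m * \<phi>2 (n+1) m)"

end

theory Submission
  imports Defs
begin

text \<open>Both equations of the Lax pair act linearly on the state \<open>(\<phi>, \<phi>~)\<close>, with
  coefficients that do not depend on the solution: the tilde shift by \<open>[[0, 1], [-s\<^sup>2, -h]]\<close>
  and the hat shift by \<open>[[-g, 1], [-s\<^sup>2, -H]]\<close>, where \<open>s\<^sup>2 = \<alpha>\<^sup>2 - k\<^sup>2\<close> and
  \<open>H = h + g~\<close>. Hence \<open>Y\<close> and its three shifts are combinations, with coefficients in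
  \<open>s\<^sup>2, \<mu>\<^sup>2, g, H\<close>, of the four brackets of \<open>\<Phi>\<^sub>p, \<Phi>\<^sub>p~\<close> against \<open>\<Phi>\<^sub>q, \<Phi>\<^sub>q~\<close> at
  one point. In the leKdV-II expression everything then cancels except a multiple of
  \<open>g H - (\<beta>\<^sup>2 - \<alpha>\<^sup>2)\<close>, which vanishes by the second compatibility condition, and
  \<open>(p\<^sup>2 - q\<^sup>2)\<^sup>2\<close> times the \<open>2\<times>2\<close> minor of the brackets, which by Cauchy--Binet is
  \<open>det M\<close> times the two Wronskians.\<close>

lemma leKdV_ring_identity:
  fixes Q\<^sub>0\<^sub>1 Q\<^sub>1\<^sub>0 P\<^sub>0\<^sub>0 P\<^sub>1\<^sub>1 s \<mu> \<gamma> H e :: "'a::comm_ring_1"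
  assumes "\<gamma> * H = e"
  defines "Y \<equiv> Q\<^sub>0\<^sub>1 - Q\<^sub>1\<^sub>0"
    and "Yt \<equiv> s * Q\<^sub>0\<^sub>1 - \<mu> * Q\<^sub>1\<^sub>0"
    and "Yh \<equiv> s * Q\<^sub>0\<^sub>1 - \<mu> * Q\<^sub>1\<^sub>0 + (\<mu> - s) * \<gamma> * P\<^sub>0\<^sub>0 + \<gamma> * H * (Q\<^sub>0\<^sub>1 - Q\<^sub>1\<^sub>0)"
    and "Yth \<equiv> s * \<mu> * (Q\<^sub>0\<^sub>1 - Q\<^sub>1\<^sub>0) + (\<mu> - s) * H * P\<^sub>1\<^sub>1 + \<gamma> * H * (s * Q\<^sub>0\<^sub>1 - \<mu> * Q\<^sub>1\<^sub>0)"
  shows "s * \<mu> * Y * Yh + Yt * Yth - (s + e) * (\<mu> + e) * Y * Yt - Yh * Yth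
       = - e * (Y * Yth + Yt * Yh + (\<mu> - s)^2 * (P\<^sub>0\<^sub>0 * P\<^sub>1\<^sub>1 - Q\<^sub>0\<^sub>1 * Q\<^sub>1\<^sub>0))"
  unfolding Y_def Yt_def Yh_def Yth_def assms(1)[symmetric]
  by (simp add: algebra_simps power2_eq_square)

lemma lax_sol_tilde_tilde:
  assumes "lax_sol \<alpha> k h g \<phi>"
  shows "\<phi> (n+2) m = (k^2 - \<alpha>^2) * \<phi> n m - h n m * \<phi> (n+1) m"
proof -
  have "\<phi> (n+2) m + h n m * \<phi> (n+1) m + \<alpha>^2 * \<phi> n m = k^2 * \<phi> n m"
    using assms unfolding lax_sol_def by blast
  then show ?thesis by (simp add: algebra_simps eq_diff_eq)
qed

lemma lax_sol_hat:
  assumes "lax_sol \<alpha> k h g \<phi>"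
  shows "\<phi> n (m+1) = \<phi> (n+1) m - g n m * \<phi> n m"
  using assms unfolding lax_sol_def by blast

lemma lax_sol_tilde_hat:
  assumes "lax_sol \<alpha> k h g \<phi>"
  shows "\<phi> (n+1) (m+1) = (k^2 - \<alpha>^2) * \<phi> n m - (h n m + g (n+1) m) * \<phi> (n+1) m"
proof -
  have "\<phi> (n+1) (m+1) = \<phi> (n+2) m - g (n+1) m * \<phi> (n+1) m"
    using lax_sol_hat[OF assms, of "n+1" m] by (simp add: add.assoc)
  then show ?thesis
    unfolding lax_sol_tilde_tilde[OF assms] by (simp add: algebra_simps)
qed

locale lax_solution_pairs =
  fixes \<alpha> p q A B C D :: complex
    and h g \<phi>1 \<phi>2 \<psi>1 \<psi>2 :: "int \<Rightarrow> int \<Rightarrow> complex"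
  assumes sol1: "lax_sol \<alpha> p h g \<phi>1" and sol2: "lax_sol \<alpha> p h g \<phi>2"
    and sol3: "lax_sol \<alpha> q h g \<psi>1" and sol4: "lax_sol \<alpha> q h g \<psi>2"
begin

abbreviation Y :: "int \<Rightarrow> int \<Rightarrow> complex" where
  "Y \<equiv> Yfun A B C D \<phi>1 \<phi>2 \<psi>1 \<psi>2"

definition pairing :: "int \<Rightarrow> int \<Rightarrow> int \<Rightarrow> int \<Rightarrow> complex" where
  "pairing i j n m =
     A * \<phi>1 (n+i) m * \<psi>1 (n+j) m + B * \<phi>1 (n+i) m * \<psi>2 (n+j) m
   + C * \<phi>2 (n+i) m * \<psi>1 (n+j) m + D * \<phi>2 (n+i) m * \<psi>2 (n+j) m"

lemma Y_eq_pairing: "Y n m = pairing 0 1 n m - pairing 1 0 n m"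
  unfolding Yfun_def pairing_def by (simp add: algebra_simps)

lemma Y_tilde:
  "Y (n+1) m = (\<alpha>^2 - p^2) * pairing 0 1 n m - (\<alpha>^2 - q^2) * pairing 1 0 n m"
  unfolding Yfun_def pairing_def add.assoc one_add_one
  unfolding lax_sol_tilde_tilde[OF sol1] lax_sol_tilde_tilde[OF sol2]
    lax_sol_tilde_tilde[OF sol3] lax_sol_tilde_tilde[OF sol4]
  by (simp add: algebra_simps)

lemma pairing_01_hat:
  "pairing 0 1 n (m+1) =
     g n m * (h n m + g (n+1) m) * pairing 0 1 n m + (q^2 - \<alpha>^2) * pairing 1 0 n m
   - g n m * (q^2 - \<alpha>^2) * pairing 0 0 n m - (h n m + g (n+1) m) * pairing 1 1 n m"
  unfolding pairing_def add_0_right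
  unfolding lax_sol_hat[OF sol1] lax_sol_hat[OF sol2]
    lax_sol_tilde_hat[OF sol3] lax_sol_tilde_hat[OF sol4]
  by (simp add: algebra_simps)

lemma pairing_10_hat:
  "pairing 1 0 n (m+1) =
     g n m * (h n m + g (n+1) m) * pairing 1 0 n m + (p^2 - \<alpha>^2) * pairing 0 1 n m
   - g n m * (p^2 - \<alpha>^2) * pairing 0 0 n m - (h n m + g (n+1) m) * pairing 1 1 n m"
  unfolding pairing_def add_0_right
  unfolding lax_sol_hat[OF sol3] lax_sol_hat[OF sol4]
    lax_sol_tilde_hat[OF sol1] lax_sol_tilde_hat[OF sol2]
  by (simp add: algebra_simps)

lemma Y_hat:
  "Y n (m+1) =
     (\<alpha>^2 - p^2) * pairing 0 1 n m - (\<alpha>^2 - q^2) * pairing 1 0 n m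
   + (p^2 - q^2) * g n m * pairing 0 0 n m
   + g n m * (h n m + g (n+1) m) * (pairing 0 1 n m - pairing 1 0 n m)"
  unfolding Y_eq_pairing[of n "m+1"] pairing_01_hat pairing_10_hat
  by (simp add: algebra_simps)

lemma Y_tilde_hat:
  "Y (n+1) (m+1) =
     (\<alpha>^2 - p^2) * (\<alpha>^2 - q^2) * (pairing 0 1 n m - pairing 1 0 n m)
   + (p^2 - q^2) * (h n m + g (n+1) m) * pairing 1 1 n m
   + g n m * (h n m + g (n+1) m) * ((\<alpha>^2 - p^2) * pairing 0 1 n m - (\<alpha>^2 - q^2) * pairing 1 0 n m)"
  unfolding Y_tilde[of n "m+1"] pairing_01_hat pairing_10_hat
  by (simp add: algebra_simps)

lemma pairing_wronskian:
  "pairing 0 0 n m * pairing 1 1 n m - pairing 0 1 n m * pairing 1 0 n m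
   = (A * D - B * C) * (\<phi>1 n m * \<phi>2 (n+1) m - \<phi>2 n m * \<phi>1 (n+1) m)
       * (\<psi>1 n m * \<psi>2 (n+1) m - \<psi>2 n m * \<psi>1 (n+1) m)"
  unfolding pairing_def add_0_right by algebra

lemma leKdV_II_pairing:
  assumes "(h n m + g (n+1) m) * g n m = \<beta>^2 - \<alpha>^2"
  shows "(\<alpha>^2 - p^2) * (\<alpha>^2 - q^2) * Y n m * Y n (m+1) + Y (n+1) m * Y (n+1) (m+1)
       - (\<beta>^2 - p^2) * (\<beta>^2 - q^2) * Y n m * Y (n+1) m - Y n (m+1) * Y (n+1) (m+1)
     = (\<alpha>^2 - \<beta>^2) * (Y n m * Y (n+1) (m+1) + Y (n+1) m * Y n (m+1)
         + (p^2 - q^2)^2 * (pairing 0 0 n m * pairing 1 1 n m - pairing 0 1 n m * pairing 1 0 n m))"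
proof -
  have gH: "g n m * (h n m + g (n+1) m) = \<beta>^2 - \<alpha>^2"
    using assms by (simp add: mult.commute)
  have t2: "\<alpha>^2 - p^2 + (\<beta>^2 - \<alpha>^2) = \<beta>^2 - p^2"
    and \<nu>2: "\<alpha>^2 - q^2 + (\<beta>^2 - \<alpha>^2) = \<beta>^2 - q^2"
    and p_q: "\<alpha>^2 - q^2 - (\<alpha>^2 - p^2) = p^2 - q^2"
    and \<alpha>\<beta>: "- (\<beta>^2 - \<alpha>^2) = \<alpha>^2 - \<beta>^2"
    by simp_all
  show ?thesis
    using leKdV_ring_identity[OF gH, where s = "\<alpha>^2 - p^2" and \<mu> = "\<alpha>^2 - q^2"
        and Q\<^sub>0\<^sub>1 = "pairing 0 1 n m" and Q\<^sub>1\<^sub>0 = "pairing 1 0 n m"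
        and P\<^sub>0\<^sub>0 = "pairing 0 0 n m" and P\<^sub>1\<^sub>1 = "pairing 1 1 n m"]
    unfolding Y_eq_pairing[of n m] Y_tilde[of n m] Y_hat[of n m] Y_tilde_hat t2 \<nu>2 p_q \<alpha>\<beta> gH .
qed

end

theorem proposition4p2:
  fixes \<alpha> \<beta> p q \<rho>1 \<rho>2 A B C D :: complex
    and h g \<phi>1 \<phi>2 \<psi>1 \<psi>2 :: "int \<Rightarrow> int \<Rightarrow> complex"
  assumes pq: "p^2 \<noteq> q^2"
    and hg1: "\<forall>n m. h n (m+1) - h (n+1) m = g (n+2) m - g n m"
    and hg2: "\<forall>n m. (h n m + g (n+1) m) * g n m = \<beta>^2 - \<alpha>^2"
    and sol1: "lax_sol \<alpha> p h g \<phi>1" and sol2: "lax_sol \<alpha> p h g \<phi>2"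
    and li1: "lin_indep2 \<phi>1 \<phi>2"
    and sol3: "lax_sol \<alpha> q h g \<psi>1" and sol4: "lax_sol \<alpha> q h g \<psi>2"
    and li2: "lin_indep2 \<psi>1 \<psi>2"
    and W1: "\<forall>n m. \<phi>1 n m * \<phi>2 (n+1) m - \<phi>2 n m * \<phi>1 (n+1) m
               = \<rho>1 * (\<alpha>^2 - p^2) powi n * (\<beta>^2 - p^2) powi m"
    and W2: "\<forall>n m. \<psi>1 n m * \<psi>2 (n+1) m - \<psi>2 n m * \<psi>1 (n+1) m
               = \<rho>2 * (\<alpha>^2 - q^2) powi n * (\<beta>^2 - q^2) powi m"
  shows "\<forall>n m.
    (let Y = Yfun A B C D \<phi>1 \<phi>2 \<psi>1 \<psi>2;
         s2 = \<alpha>^2 - p^2; \<mu>2 = \<alpha>^2 - q^2; t2 = \<beta>^2 - p^2; \<nu>2 = \<beta>^2 - q^2;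
         \<delta> = \<rho>1 * \<rho>2 * (A * D - B * C)
     in s2 * \<mu>2 * Y n m * Y n (m+1) + Y (n+1) m * Y (n+1) (m+1)
        - t2 * \<nu>2 * Y n m * Y (n+1) m - Y n (m+1) * Y (n+1) (m+1)
      = (\<alpha>^2 - \<beta>^2) * (Y n m * Y (n+1) (m+1) + Y (n+1) m * Y n (m+1)
          + \<delta> * (p^2 - q^2)^2 * s2 powi n * \<mu>2 powi n * t2 powi m * \<nu>2 powi m))"
proof -
  interpret lax_solution_pairs \<alpha> p q A B C D h g \<phi>1 \<phi>2 \<psi>1 \<psi>2
    using sol1 sol2 sol3 sol4 by unfold_locales
  have \<delta>: "(p^2 - q^2)^2 * (pairing 0 0 n m * pairing 1 1 n m - pairing 0 1 n m * pairing 1 0 n m)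
    = \<rho>1 * \<rho>2 * (A * D - B * C) * (p^2 - q^2)^2
      * (\<alpha>^2 - p^2) powi n * (\<alpha>^2 - q^2) powi n * (\<beta>^2 - p^2) powi m * (\<beta>^2 - q^2) powi m"
    for n m
    unfolding pairing_wronskian W1[rule_format] W2[rule_format] by (simp add: mult_ac)
  show ?thesis
    using leKdV_II_pairing[OF hg2[rule_format]] unfolding \<delta> Let_def by blast
qed

end
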